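(* Let $P$ be a finite poset and let $x$ be a maximal element or a minimal element of $P$. Then the toggleability statistic $\mathfrak{T}_x$ is $0$-mesic under rowmotion on $\mathcal{IC}(P)$, i.e. its average over every rowmotion orbit is $0$.
   Context: All posets are finite. For a poset $P$, a subset $I\subseteq P$ is interval-closed if for all $x,y\in I$ and $z\in P$ with $x\le z\le y$ we have $z\in I$; $\mathcal{IC}(P)$ is the set of interval-closed subsets of $P$. For $x\in P$ the toggle $t_x:\mathcal{IC}(P)\to\mathcal{IC}(P)$ is defined by $t_x(I)=I\triangle\{x\}$ if $I\triangle\{x\}\in\mathcal{IC}(P)$ and $t_x(I)=I$ otherwise. Rowmotion is $\mathrm{Row}=t_{x_1}\circ t_{x_2}\circ\cdots\circ t_{x_N}:\mathcal{IC}(P)\to\mathcal{IC}(P)$, where $(x_1,\dots,x_N)$ is a linear extension of $P$ (so elements are toggled from the top of the poset down); this does not depend on the choice of linear extension. The toggleability statistic $\mathfrak{T}_x:\mathcal{IC}(P)\to\{-1,0,1\}$ is $\mathfrak{T}_x(I)=1$ if $x\notin I$ and $I\cup\{x\}\in\mathcal{IC}(P)$; $\mathfrak{T}_x(I)=-1$ if $x\in I$ and $I-\{x\}\in\mathcal{IC}(P)$; and $0$ otherwise. A statistic is $c$-mesic under rowmotion if its average over each rowmotion orbit equals $c$. *)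

theory Defs
  imports Complex_Main
begin

definition interval_closed :: "('a::order) set \<Rightarrow> bool" where
  "interval_closed I \<longleftrightarrow> (\<forall>x\<in>I. \<forall>y\<in>I. \<forall>z. x \<le> z \<and> z \<le> y \<longrightarrow> z \<in> I)"

definition IC :: "('a::order) set set" where
  "IC = {I. interval_closed I}"

definition symdiff :: "'a set \<Rightarrow> 'a set \<Rightarrow> 'a set" where
  "symdiff A B = (A - B) \<union> (B - A)"

definition toggle :: "('a::order) \<Rightarrow> 'a set \<Rightarrow> 'a set" where
  "toggle x I = (if interval_closed (symdiff I {x}) then symdiff I {x} else I)"

definition linear_extension :: "('a::{finite,order}) list \<Rightarrow> bool" where
  "linear_extension xs \<longleftrightarrow> distinct xs \<and> set xs = UNIV \<and>
     (\<forall>i j. i < length xs \<and> j < length xs \<and> xs ! i < xs ! j \<longrightarrow> i < j)"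

text \<open>Rowmotion w.r.t. linear extension [x1,...,xN]: t_x1 o ... o t_xN.\<close>
definition rowmotion :: "('a::order) list \<Rightarrow> 'a set \<Rightarrow> 'a set" where
  "rowmotion xs I = foldr toggle xs I"

definition toggleability :: "('a::order) \<Rightarrow> 'a set \<Rightarrow> int" where
  "toggleability x I =
     (if x \<notin> I \<and> interval_closed (I \<union> {x}) then 1
      else if x \<in> I \<and> interval_closed (I - {x}) then -1 else 0)"

definition orbit :: "('b \<Rightarrow> 'b) \<Rightarrow> 'b \<Rightarrow> 'b set" where
  "orbit f I = {(f ^^ k) I | k. True}"

definition mesic :: "real \<Rightarrow> ('b \<Rightarrow> 'b) \<Rightarrow> ('b \<Rightarrow> real) \<Rightarrow> 'b set \<Rightarrow> bool" where
  "mesic c f stat S \<longleftrightarrow>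
     (\<forall>I\<in>S. (\<Sum>J\<in>orbit f I. stat J) / real (card (orbit f I)) = c)"

end

theory Submission
  imports Defs
begin

text \<open>
  Whether x can be toggled in an interval-closed set J depends only on which elements comparable
  to x lie in J, and then equals [x \<in> t_x J] - [x \<in> J].  Split the linear extension as
  pre @ x # suf.  If x is maximal, every element of suf is incomparable to x, so the toggles before
  t_x do not change the statistic: T_x(K) = [x \<in> Row K] - [x \<in> K].  If x is minimal, the same
  holds for the toggles of pre after t_x, giving T_x(Row K) = [x \<in> K] - [x \<in> Row K].  Either way the
  statistic telescopes to 0 along each rowmotion orbit, because rowmotion permutes the orbit.
\<close>

lemma symdiff_singleton: "symdiff I {y} = (if y \<in> I then I - {y} else insert y I)"
  unfolding symdiff_def by auto

lemma interval_closed_toggle: "interval_closed I \<Longrightarrow> interval_closed (toggle y I)"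
  unfolding toggle_def by auto

lemma mem_toggle_other: "w \<noteq> y \<Longrightarrow> w \<in> toggle y I \<longleftrightarrow> w \<in> I"
  unfolding toggle_def symdiff_singleton by auto

lemma toggle_toggle: "interval_closed I \<Longrightarrow> toggle y (toggle y I) = I"
  unfolding toggle_def by (auto simp: symdiff_singleton insert_absorb)

lemma interval_closed_foldr_toggle: "interval_closed I \<Longrightarrow> interval_closed (foldr toggle ys I)"
  by (induction ys) (auto intro: interval_closed_toggle)

lemma mem_foldr_toggle_other: "w \<notin> set ys \<Longrightarrow> w \<in> foldr toggle ys I \<longleftrightarrow> w \<in> I"
  by (induction ys) (auto simp: mem_toggle_other)

lemma inj_on_foldr_toggle: "inj_on (foldr toggle ys) {I. interval_closed I}"
proof (induction ys)
  case (Cons y ys)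
  show ?case
  proof (rule inj_onI)
    fix A B assume A: "A \<in> {I. interval_closed I}" and B: "B \<in> {I. interval_closed I}"
      and "foldr toggle (y # ys) A = foldr toggle (y # ys) B"
    then have "toggle y (toggle y (foldr toggle ys A)) = toggle y (toggle y (foldr toggle ys B))"
      by simp
    then have "foldr toggle ys A = foldr toggle ys B"
      using A B by (simp add: toggle_toggle interval_closed_foldr_toggle)
    then show "A = B" using Cons.IH A B by (blast dest: inj_onD)
  qed
qed simp

lemma interval_closed_rowmotion: "interval_closed I \<Longrightarrow> interval_closed (rowmotion xs I)"
  unfolding rowmotion_def by (rule interval_closed_foldr_toggle)

lemma inj_on_rowmotion: "inj_on (rowmotion xs) {I. interval_closed I}"
  unfolding rowmotion_def by (rule inj_on_foldr_toggle)

lemma toggleability_eq: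
  "interval_closed J \<Longrightarrow> toggleability x J = of_bool (x \<in> toggle x J) - of_bool (x \<in> J)"
  unfolding toggleability_def toggle_def symdiff_singleton by (auto simp: insert_absorb)

lemma interval_closed_insert_iff:
  assumes J: "interval_closed J"
  shows "interval_closed (insert x J) \<longleftrightarrow>
    (\<forall>a\<in>J. \<forall>z. (a \<le> z \<and> z \<le> x \<or> x \<le> z \<and> z \<le> a) \<longrightarrow> z \<in> J \<or> z = x)"
  (is "_ \<longleftrightarrow> ?between")
proof
  show "interval_closed (insert x J) \<Longrightarrow> ?between"
    unfolding interval_closed_def by blast
  assume between: ?between
  show "interval_closed (insert x J)"
    unfolding interval_closed_def
  proof (intro ballI allI impI)
    fix a b z assume "a \<in> insert x J" "b \<in> insert x J" and z: "a \<le> z \<and> z \<le> b"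
    then consider "a \<in> J" "b \<in> J" | "a = x" "b = x" | "a \<in> J" "b = x" | "a = x" "b \<in> J"
      by blast
    then show "z \<in> insert x J"
    proof cases
      case 1
      then show ?thesis using J z unfolding interval_closed_def by blast
    next
      case 2
      then show ?thesis using z by (simp add: order.antisym)
    qed (use between z in blast)+
  qed
qed

lemma interval_closed_remove_iff:
  assumes J: "interval_closed J"
  shows "interval_closed (J - {x}) \<longleftrightarrow>
    (\<forall>a\<in>J. \<forall>b\<in>J. a \<le> x \<and> x \<le> b \<longrightarrow> a = x \<or> b = x)"
proof
  show "interval_closed (J - {x}) \<Longrightarrow> \<forall>a\<in>J. \<forall>b\<in>J. a \<le> x \<and> x \<le> b \<longrightarrow> a = x \<or> b = x"
    unfolding interval_closed_def by blast
  show "\<forall>a\<in>J. \<forall>b\<in>J. a \<le> x \<and> x \<le> b \<longrightarrow> a = x \<or> b = x \<Longrightarrow> interval_closed (J - {x})"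
    using J unfolding interval_closed_def by (metis DiffE DiffI singletonD)
qed

lemma toggleability_local:
  assumes J: "interval_closed J" and J': "interval_closed J'"
    and agree: "\<And>w. w \<le> x \<or> x \<le> w \<Longrightarrow> w \<in> J \<longleftrightarrow> w \<in> J'"
  shows "toggleability x J = toggleability x J'"
proof -
  have x: "x \<in> J \<longleftrightarrow> x \<in> J'" using agree by blast
  have between: "(a \<in> J \<longleftrightarrow> a \<in> J') \<and> (z \<in> J \<longleftrightarrow> z \<in> J')"
    if "a \<le> z \<and> z \<le> x \<or> x \<le> z \<and> z \<le> a" for a z
    using that agree order_trans by metis
  have "interval_closed (insert x J) \<longleftrightarrow> interval_closed (insert x J')"
    unfolding interval_closed_insert_iff[OF J] interval_closed_insert_iff[OF J']
    using between by blast
  moreover have "interval_closed (J - {x}) \<longleftrightarrow> interval_closed (J' - {x})"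
    unfolding interval_closed_remove_iff[OF J] interval_closed_remove_iff[OF J']
    using agree by blast
  ultimately show ?thesis
    unfolding toggleability_def using x by simp
qed

lemma toggleability_foldr_toggle_incomparable:
  assumes "interval_closed K" and "\<forall>y\<in>set ys. \<not> y \<le> x \<and> \<not> x \<le> y"
  shows "toggleability x (foldr toggle ys K) = toggleability x K"
  using assms by (intro toggleability_local interval_closed_foldr_toggle mem_foldr_toggle_other) auto

lemma linear_extension_sorted_wrt:
  "linear_extension xs \<Longrightarrow> sorted_wrt (\<lambda>a b. \<not> b < a) xs"
  unfolding linear_extension_def sorted_wrt_iff_nth_less by (meson order.asym less_trans)

lemma linear_extension_split:
  assumes "linear_extension xs"
  obtains pre suf where "xs = pre @ x # suf" "x \<notin> set (pre @ suf)"
    "\<forall>y\<in>set pre. \<not> x < y" "\<forall>y\<in>set suf. \<not> y < x"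
proof -
  obtain pre suf where xs: "xs = pre @ x # suf"
    using assms unfolding linear_extension_def by (metis UNIV_I split_list)
  moreover have "x \<notin> set (pre @ suf)"
    using assms xs unfolding linear_extension_def by auto
  moreover have "\<forall>y\<in>set pre. \<not> x < y" "\<forall>y\<in>set suf. \<not> y < x"
    using linear_extension_sorted_wrt[OF assms] xs by (auto simp: sorted_wrt_append)
  ultimately show ?thesis using that by blast
qed

lemma toggleability_maximal:
  assumes le: "linear_extension xs" and max: "\<forall>y. x \<le> y \<longrightarrow> y = x"
    and K: "interval_closed K"
  shows "toggleability x K = of_bool (x \<in> rowmotion xs K) - of_bool (x \<in> K)"
proof -
  obtain pre suf where xs: "xs = pre @ x # suf" and x: "x \<notin> set (pre @ suf)"
    and "\<forall>y\<in>set pre. \<not> x < y" and suf: "\<forall>y\<in>set suf. \<not> y < x"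
    by (rule linear_extension_split[OF le])
  define J where "J = foldr toggle suf K"
  have J: "interval_closed J" unfolding J_def using K by (rule interval_closed_foldr_toggle)
  have "\<forall>y\<in>set suf. \<not> y \<le> x \<and> \<not> x \<le> y"
    using suf max x by (auto simp: le_less)
  then have "toggleability x K = toggleability x J"
    unfolding J_def using K by (simp add: toggleability_foldr_toggle_incomparable)
  also have "\<dots> = of_bool (x \<in> toggle x J) - of_bool (x \<in> J)"
    using J by (rule toggleability_eq)
  also have "\<dots> = of_bool (x \<in> rowmotion xs K) - of_bool (x \<in> K)"
    unfolding J_def rowmotion_def xs using x by (simp add: mem_foldr_toggle_other)
  finally show ?thesis .
qed

lemma toggleability_minimal:
  assumes le: "linear_extension xs" and min: "\<forall>y. y \<le> x \<longrightarrow> y = x"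
    and K: "interval_closed K"
  shows "toggleability x (rowmotion xs K) = of_bool (x \<in> K) - of_bool (x \<in> rowmotion xs K)"
proof -
  obtain pre suf where xs: "xs = pre @ x # suf" and x: "x \<notin> set (pre @ suf)"
    and pre: "\<forall>y\<in>set pre. \<not> x < y" and "\<forall>y\<in>set suf. \<not> y < x"
    by (rule linear_extension_split[OF le])
  define J where "J = foldr toggle suf K"
  have J: "interval_closed J" unfolding J_def using K by (rule interval_closed_foldr_toggle)
  have row: "rowmotion xs K = foldr toggle pre (toggle x J)"
    unfolding rowmotion_def xs J_def by simp
  have "\<forall>y\<in>set pre. \<not> y \<le> x \<and> \<not> x \<le> y"
    using pre min x by (auto simp: le_less)
  then have "toggleability x (rowmotion xs K) = toggleability x (toggle x J)"
    unfolding row using J interval_closed_toggle toggleability_foldr_toggle_incomparable by blast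
  also have "\<dots> = of_bool (x \<in> toggle x (toggle x J)) - of_bool (x \<in> toggle x J)"
    using interval_closed_toggle[OF J] by (rule toggleability_eq)
  also have "\<dots> = of_bool (x \<in> K) - of_bool (x \<in> rowmotion xs K)"
    unfolding row J_def using x J[unfolded J_def]
    by (simp add: toggle_toggle mem_foldr_toggle_other)
  finally show ?thesis .
qed

lemma image_orbit_subset: "f ` orbit f I \<subseteq> orbit f I"
proof
  fix J assume "J \<in> f ` orbit f I"
  then obtain k where "J = (f ^^ Suc k) I" unfolding orbit_def by auto
  then show "J \<in> orbit f I" unfolding orbit_def by blast
qed

lemma orbit_subset:
  assumes "f ` S \<subseteq> S" and "I \<in> S"
  shows "orbit f I \<subseteq> S"
proof -
  have "(f ^^ k) I \<in> S" for k by (induction k) (use assms in auto)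
  then show ?thesis unfolding orbit_def by blast
qed

lemma sum_orbit_comp:
  assumes "finite (orbit f I)" and "inj_on f (orbit f I)"
  shows "(\<Sum>J\<in>orbit f I. h (f J)) = (\<Sum>J\<in>orbit f I. h J)"
proof -
  have "f ` orbit f I = orbit f I"
    using endo_inj_surj[OF assms(1) image_orbit_subset assms(2)] .
  then show ?thesis using sum.reindex[OF assms(2), of h] by simp
qed

lemma sum_orbit_telescope:
  fixes h :: "'b \<Rightarrow> 'c::ab_group_add"
  assumes "finite (orbit f I)" and "inj_on f (orbit f I)"
  shows "(\<Sum>J\<in>orbit f I. h (f J) - h J) = 0"
  using sum_orbit_comp[OF assms] by (simp add: sum_subtractf)

lemma sum_orbit_rowmotion_toggleability:
  fixes x :: "'a::{finite,order}"
  assumes le: "linear_extension xs"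
    and ext: "(\<forall>y. x \<le> y \<longrightarrow> y = x) \<or> (\<forall>y. y \<le> x \<longrightarrow> y = x)"
    and I: "interval_closed I"
  shows "(\<Sum>J\<in>orbit (rowmotion xs) I. toggleability x J) = 0"
proof -
  let ?O = "orbit (rowmotion xs) I" and ?c = "\<lambda>J. of_bool (x \<in> J) :: int"
  have O: "?O \<subseteq> {J. interval_closed J}"
    using I interval_closed_rowmotion by (intro orbit_subset) auto
  have fin: "finite ?O" by simp
  have inj: "inj_on (rowmotion xs) ?O" using inj_on_rowmotion O by (rule inj_on_subset)
  from ext show ?thesis
  proof
    assume "\<forall>y. x \<le> y \<longrightarrow> y = x"
    then have "toggleability x J = ?c (rowmotion xs J) - ?c J" if "J \<in> ?O" for J
      using that O le toggleability_maximal by blast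
    then have "(\<Sum>J\<in>?O. toggleability x J) = (\<Sum>J\<in>?O. ?c (rowmotion xs J) - ?c J)"
      by (rule sum.cong[OF refl])
    then show ?thesis using sum_orbit_telescope[OF fin inj] by simp
  next
    assume "\<forall>y. y \<le> x \<longrightarrow> y = x"
    then have "toggleability x (rowmotion xs J) = - (?c (rowmotion xs J) - ?c J)" if "J \<in> ?O" for J
      using that O le toggleability_minimal by fastforce
    then have "(\<Sum>J\<in>?O. toggleability x (rowmotion xs J)) = - (\<Sum>J\<in>?O. ?c (rowmotion xs J) - ?c J)"
      by (simp add: sum_negf[symmetric])
    moreover have "(\<Sum>J\<in>?O. toggleability x (rowmotion xs J)) = (\<Sum>J\<in>?O. toggleability x J)"
      by (rule sum_orbit_comp[OF fin inj])
    ultimately show ?thesis using sum_orbit_telescope[OF fin inj, of ?c] by simp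
  qed
qed

theorem proposition2p19:
  fixes x :: "'a::{finite,order}" and xs :: "'a list"
  assumes "linear_extension xs"
    and "(\<forall>y. x \<le> y \<longrightarrow> y = x) \<or> (\<forall>y. y \<le> x \<longrightarrow> y = x)"
  shows "mesic 0 (rowmotion xs) (\<lambda>I. real_of_int (toggleability x I)) IC"
  unfolding mesic_def IC_def
proof
  fix I :: "'a set" assume "I \<in> {I. interval_closed I}"
  then have "(\<Sum>J\<in>orbit (rowmotion xs) I. toggleability x J) = 0"
    using sum_orbit_rowmotion_toggleability assms by blast
  then show "(\<Sum>J\<in>orbit (rowmotion xs) I. real_of_int (toggleability x J))
      / real (card (orbit (rowmotion xs) I)) = 0"
    by (simp flip: of_int_sum)
qed

end
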